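(* Let $M_n=V\,{\rm diag}(\Lambda_{n1},\dots,\Lambda_{nd})V^{-1}$ and $\hat M_n=M_n+\sigma W_n$, $n=1,\dots,N$, with $V$ real invertible, $\Lambda_{ni}$ real, and $\|W_n\|\le1$; let $U_\circ$ be orthogonal with ${\rm low}(U_\circ^TM_nU_\circ)=0$ for all $n$; let $Y$ be skew-symmetric with $\|Y\|=1$ and $X$ any skew-symmetric matrix. For $\alpha,\sigma$ put $U=U_\circ e^{\alpha Y}$, $K_n=U^T\hat M_nU$ and $$g_n={\rm low}(K_n),\quad\dot g_n={\rm low}([K_n,X]),\quad\ddot g_n={\rm low}([[K_n,X],X]),$$ regarded as functions of $(\alpha,\sigma)$; let $\partial_\alpha$, $\partial_\sigma$ denote partial derivatives at $(\alpha,\sigma)=(0,0)$, and let $g_n,\dot g_n,\ddot g_n$ without derivative denote their values at $(0,0)$. Define $$\tilde A_\alpha=\Big|\sum_{n=1}^N{\rm Tr}\big(\dot g_n^T\partial_\alpha\dot g_n+\dot g_n^T\partial_\alpha\dot g_n+\ddot g_n^T\partial_\alpha g_n+\partial_\alpha g_n^T\ddot g_n\big)\Big|,$$ $$\tilde A_\sigma=\Big|\sum_{n=1}^N{\rm Tr}\big(\dot g_n^T\partial_\sigma\dot g_n+\partial_\sigma\dot g_n^T\dot g_n+\ddot g_n^T\partial_\sigma g_n+\partial_\sigma g_n^T\ddot g_n\big)\Big|.$$ Then $\tilde A_\alpha\le A_\alpha\|X\|^2$ and $\tilde A_\sigma\le A_\sigma\|X\|^2$ with $A_\alpha=32\sum_{n=1}^N\|M_n\|^2$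 and $A_\sigma=16\sqrt N\sqrt{\sum_{n=1}^N\|M_n\|^2}$.
   Context: All matrices are real $d\times d$. ${\rm low}(A)$ is the strictly lower-triangular part of $A$; $[A,B]=AB-BA$; $\|\cdot\|$ is the Frobenius norm; $e^{\alpha Y}$ is the matrix exponential. *)

theory Defs
  imports "HOL-Analysis.Analysis"
begin

text \<open>Matrices are real d x d matrices of type real^'d^'d with matrix product (**).
  The norm of real^'d^'d is the Frobenius norm. Indices are ordered by a linear order on 'd.\<close>

primrec mpow :: "real^'d^'d \<Rightarrow> nat \<Rightarrow> real^'d^'d" where
  "mpow A 0 = mat 1"
| "mpow A (Suc k) = A ** mpow A k"

text \<open>Matrix exponential (note: exp on real^'d^'d would be componentwise).\<close>
definition mexp :: "real^'d^'d \<Rightarrow> real^'d^'d" where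
  "mexp A = (\<Sum>k. (1 / fact k) *\<^sub>R mpow A k)"

definition low :: "real^('d::{finite,linorder})^('d::{finite,linorder}) \<Rightarrow> real^('d::{finite,linorder})^('d::{finite,linorder})" where
  "low A = (\<chi> i j. if j < i then A $ i $ j else 0)"

definition commut :: "real^'d^'d \<Rightarrow> real^'d^'d \<Rightarrow> real^'d^'d" where
  "commut A B = A ** B - B ** A"

definition diagm :: "('d \<Rightarrow> real) \<Rightarrow> real^'d^'d" where
  "diagm L = (\<chi> i j. if i = j then L i else 0)"

definition skew :: "real^'d^'d \<Rightarrow> bool" where
  "skew A \<longleftrightarrow> transpose A = - A"

definition Kmat :: "real^'d^'d \<Rightarrow> real^'d^'d \<Rightarrow> real^'d^'d \<Rightarrow> real^'d^'d \<Rightarrow> real \<Rightarrow> real \<Rightarrow> real^'d^'d" where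
  "Kmat U0 Y Mn Wn a s =
     (let U = U0 ** mexp (a *\<^sub>R Y) in transpose U ** (Mn + s *\<^sub>R Wn) ** U)"

end

theory Submission
  imports Defs
begin

text \<open>At \<open>(\<alpha>,\<sigma>) = (0,0)\<close> we have \<open>K\<^sub>n = U\<^sub>\<circ>\<^sup>T M\<^sub>n U\<^sub>\<circ>\<close>, so \<open>\<parallel>K\<^sub>n\<parallel> = \<parallel>M\<^sub>n\<parallel>\<close>, and
  \<open>\<partial>\<^sub>\<alpha>K\<^sub>n = K\<^sub>nY + Y\<^sup>TK\<^sub>n\<close>, \<open>\<partial>\<^sub>\<sigma>K\<^sub>n = U\<^sub>\<circ>\<^sup>TW\<^sub>nU\<^sub>\<circ>\<close> have norms at most \<open>2\<parallel>M\<^sub>n\<parallel>\<close> and \<open>1\<close>.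
  Since \<open>low\<close> and \<open>[\<cdot>,X]\<close> are linear, they commute with differentiation; \<open>low\<close> is a
  contraction, \<open>\<parallel>[A,X]\<parallel> \<le> 2\<parallel>A\<parallel>\<parallel>X\<parallel>\<close> and \<open>|Tr(A\<^sup>TB)| \<le> \<parallel>A\<parallel>\<parallel>B\<parallel>\<close>, so every summand is at most
  \<open>16\<parallel>K\<^sub>n\<parallel>\<parallel>\<partial>K\<^sub>n\<parallel>\<parallel>X\<parallel>\<^sup>2\<close>. For \<open>\<sigma>\<close> the Cauchy-Schwarz inequality \<open>\<Sum>\<parallel>M\<^sub>n\<parallel> \<le> \<surd>N \<surd>(\<Sum>\<parallel>M\<^sub>n\<parallel>\<^sup>2)\<close>
  finishes the proof.\<close>

lemma norm_matrix_power2_rows: "(norm (A::real^'n^'m))\<^sup>2 = (\<Sum>i\<in>UNIV. (norm (A$i))\<^sup>2)"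
  by (simp add: power2_norm_eq_inner inner_vec_def)

lemma norm_matrix_power2: "(norm (A::real^'n^'m))\<^sup>2 = (\<Sum>i\<in>UNIV. \<Sum>j\<in>UNIV. (A$i$j)\<^sup>2)"
  unfolding power2_norm_eq_inner by (simp add: inner_vec_def power2_eq_square)

lemma norm_transpose: "norm (transpose (A::real^'n^'m)) = norm A"
proof -
  have "(norm (transpose A))\<^sup>2 = (norm A)\<^sup>2"
    unfolding norm_matrix_power2 transpose_def by (simp, rule sum.swap)
  then show ?thesis by (simp add: power2_eq_iff_nonneg)
qed

lemma norm_matrix_mult_le: "norm ((A::real^'n^'m) ** (B::real^'p^'n)) \<le> norm A * norm B"
proof -
  have entry: "(A ** B)$i$j = A$i \<bullet> transpose B$j" for i j
    by (simp add: matrix_matrix_mult_def inner_vec_def transpose_def)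
  have "(norm (A ** B))\<^sup>2 = (\<Sum>i\<in>UNIV. \<Sum>j\<in>UNIV. (A$i \<bullet> transpose B$j)\<^sup>2)"
    unfolding norm_matrix_power2 entry ..
  also have "\<dots> \<le> (\<Sum>i\<in>UNIV. \<Sum>j\<in>UNIV. (norm (A$i))\<^sup>2 * (norm (transpose B$j))\<^sup>2)"
    by (intro sum_mono) (metis Cauchy_Schwarz_ineq2 abs_le_square_iff abs_norm_cancel
        abs_mult power_mult_distrib)
  also have "\<dots> = (\<Sum>i\<in>UNIV. (norm (A$i))\<^sup>2) * (\<Sum>j\<in>UNIV. (norm (transpose B$j))\<^sup>2)"
    by (simp add: sum_product)
  also have "\<dots> = (norm A)\<^sup>2 * (norm (transpose B))\<^sup>2"
    by (simp only: norm_matrix_power2_rows)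
  also have "\<dots> = (norm A * norm B)\<^sup>2"
    by (simp add: norm_transpose power_mult_distrib)
  finally show ?thesis by (simp add: power2_le_iff_abs_le)
qed

lemma norm_matrix_mult_orthogonal:
  assumes "orthogonal_matrix U"
  shows "norm ((A::real^'n^'m) ** (U::real^'n^'n)) = norm A"
proof -
  have "orthogonal_transformation ((*v) (transpose U))"
    using assms by (simp add: orthogonal_transformation_matrix matrix_vector_mul_linear)
  then have "norm (transpose U *v A$i) = norm (A$i)" for i
    by (rule orthogonal_transformation_norm)
  then have row: "norm ((A ** U)$i) = norm (A$i)" for i
    by (simp add: matrix_matrix_mult_def vector_matrix_mult_def matrix_vector_mult_def transpose_def
        vec_eq_iff mult.commute)
  have "(norm (A ** U))\<^sup>2 = (norm A)\<^sup>2"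
    unfolding norm_matrix_power2_rows row ..
  then show ?thesis by (simp add: power2_eq_iff_nonneg)
qed

lemma norm_orthogonal_conj:
  assumes "orthogonal_matrix U"
  shows "norm (transpose U ** A ** U) = norm (A::real^'n^'n)"
proof -
  have "norm (transpose U ** A ** U) = norm (transpose (transpose U ** A))"
    using assms by (simp add: norm_matrix_mult_orthogonal norm_transpose)
  also have "\<dots> = norm (transpose A ** U)" by (simp add: matrix_transpose_mul)
  also have "\<dots> = norm A" using assms by (simp add: norm_matrix_mult_orthogonal norm_transpose)
  finally show ?thesis .
qed

lemma trace_transpose_mult: "trace (transpose (A::real^'n^'n) ** B) = A \<bullet> B"
  unfolding trace_def matrix_matrix_mult_def transpose_def inner_vec_def by (simp, rule sum.swap)

lemma norm_low_le: "norm (low A) \<le> norm A"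
proof -
  have "(norm (low A))\<^sup>2 \<le> (norm A)\<^sup>2"
    unfolding norm_matrix_power2 low_def by (auto intro!: sum_mono)
  then show ?thesis by (simp add: power2_le_iff_abs_le)
qed

lemma norm_commut_le: "norm (commut A B) \<le> 2 * norm A * norm (B::real^'n^'n)"
proof -
  have "norm (commut A B) \<le> norm (A ** B) + norm (B ** A)"
    unfolding commut_def by (rule norm_triangle_ineq4)
  also have "\<dots> \<le> norm A * norm B + norm B * norm A"
    by (intro add_mono norm_matrix_mult_le)
  finally show ?thesis by simp
qed

lemma bounded_bilinear_matrix_mult: "bounded_bilinear ((**) :: real^'n^'m \<Rightarrow> real^'p^'n \<Rightarrow> _)"
proof
  show "\<exists>K. \<forall>a b. norm ((a::real^'n^'m) ** (b::real^'p^'n)) \<le> norm a * norm b * K"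
    by (rule exI[of _ 1]) (simp add: norm_matrix_mult_le)
qed (simp_all add: matrix_matrix_mult_def vec_eq_iff sum.distrib algebra_simps sum_distrib_left)

lemma bounded_linear_transpose: "bounded_linear (transpose :: real^'n^'m \<Rightarrow> real^'m^'n)"
proof (rule bounded_linear_intro[where K=1])
  show "norm (transpose A) \<le> norm A * 1" for A :: "real^'n^'m" by (simp add: norm_transpose)
qed (simp_all add: transpose_def vec_eq_iff)

lemma bounded_linear_low: "bounded_linear low"
proof (rule bounded_linear_intro[where K=1])
  show "norm (low A) \<le> norm A * 1" for A by (simp add: norm_low_le)
qed (simp_all add: low_def vec_eq_iff)

lemma bounded_linear_commut_left: "bounded_linear (\<lambda>A::real^'n^'n. commut A X)"
  unfolding commut_def
  by (intro bounded_linear_sub bounded_bilinear.bounded_linear_left bounded_bilinear.bounded_linear_right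
      bounded_bilinear_matrix_mult)

lemma vector_derivative_bounded_linear:
  assumes "bounded_linear L" and "(f has_vector_derivative D) (at x)"
  shows "vector_derivative (\<lambda>t. L (f t)) (at x) = L D"
  using bounded_linear.has_vector_derivative[OF assms] by (rule vector_derivative_at)

lemma norm_low_commut_le: "norm (low (commut A X)) \<le> 2 * norm A * norm X"
  using norm_low_le[of "commut A X"] norm_commut_le[of A X] by linarith

lemma norm_low_commut_commut_le: "norm (low (commut (commut A X) X)) \<le> 4 * norm A * (norm X)\<^sup>2"
proof -
  have "norm (low (commut (commut A X) X)) \<le> 2 * norm (commut A X) * norm X"
    by (rule norm_low_commut_le)
  also have "\<dots> \<le> 2 * (2 * norm A * norm X) * norm X"
    by (intro mult_right_mono mult_left_mono norm_commut_le) auto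
  finally show ?thesis by (simp add: power2_eq_square algebra_simps)
qed

text \<open>The Frobenius norm is not unital: \<open>\<parallel>I\<parallel> = \<surd>d\<close>.\<close>

lemma norm_mpow_le: "norm (mpow A k) \<le> norm (mat 1::real^'n^'n) * norm (A::real^'n^'n) ^ k"
proof (induction k)
  case (Suc k)
  have "norm (mpow A (Suc k)) \<le> norm A * norm (mpow A k)"
    by (simp add: norm_matrix_mult_le)
  also have "\<dots> \<le> norm A * (norm (mat 1::real^'n^'n) * norm A ^ k)"
    by (rule mult_left_mono[OF Suc]) simp
  finally show ?case by (simp add: algebra_simps)
qed simp

lemma norm_mexp_term_le:
  "norm ((1 / fact k) *\<^sub>R mpow A k) \<le> norm (mat 1::real^'n^'n) * (inverse (fact k) * norm (A::real^'n^'n) ^ k)"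
  using divide_right_mono[OF norm_mpow_le[of A k], of "fact k"] by (simp add: field_simps)

lemma summable_norm_mexp_series: "summable (\<lambda>k. norm ((1 / fact k) *\<^sub>R mpow (A::real^'n^'n) k))"
  by (rule summable_comparison_test[OF _ summable_mult[OF summable_exp]])
    (use norm_mexp_term_le in auto)

lemma norm_mexp_sub_linear_le:
  "norm (mexp A - mat 1 - A) \<le> norm (mat 1::real^'n^'n) * (norm (A::real^'n^'n))\<^sup>2 * exp (norm A)"
proof -
  let ?c = "norm (mat 1::real^'n^'n)"
  define f where "f k = (1 / fact k) *\<^sub>R mpow A k" for k
  have sn: "summable (\<lambda>k. norm (f k))"
    unfolding f_def by (rule summable_norm_mexp_series)
  have "mexp A = (\<Sum>n. f (n + 2)) + (\<Sum>i<2. f i)"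
    unfolding mexp_def f_def[symmetric] by (rule suminf_split_initial_segment[OF summable_norm_cancel[OF sn]])
  moreover have "(\<Sum>i<2. f i) = mat 1 + A"
    by (simp add: f_def eval_nat_numeral)
  ultimately have tail: "mexp A - mat 1 - A = (\<Sum>n. f (n + 2))"
    by simp
  have term_le: "norm (f (n + 2)) \<le> ?c * (norm A)\<^sup>2 * (inverse (fact n) * norm A ^ n)" for n
  proof -
    have "norm (f (n + 2)) \<le> ?c * (inverse (fact (n + 2)) * norm A ^ (n + 2))"
      unfolding f_def by (rule norm_mexp_term_le)
    also have "\<dots> \<le> ?c * (inverse (fact n) * norm A ^ (n + 2))"
      by (intro mult_left_mono mult_right_mono le_imp_inverse_le fact_mono) auto
    finally show ?thesis by (simp add: power_add power2_eq_square algebra_simps)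
  qed
  have "norm (mexp A - mat 1 - A) \<le> (\<Sum>n. norm (f (n + 2)))"
    unfolding tail by (rule summable_norm[OF summable_ignore_initial_segment[OF sn]])
  also have "\<dots> \<le> (\<Sum>n. ?c * (norm A)\<^sup>2 * (inverse (fact n) * norm A ^ n))"
    by (intro suminf_le term_le summable_ignore_initial_segment[OF sn] summable_mult summable_exp)
  also have "\<dots> = ?c * (norm A)\<^sup>2 * (\<Sum>n. inverse (fact n) * norm A ^ n)"
    by (rule suminf_mult[OF summable_exp])
  also have "(\<Sum>n. inverse (fact n) * norm A ^ n) = exp (norm A)"
    using exp_converges[of "norm A"] by (simp add: sums_iff field_simps)
  finally show ?thesis .
qed

lemma mexp_zero [simp]: "mexp (0::real^'n^'n) = mat 1"
  using norm_mexp_sub_linear_le[of "0::real^'n^'n"] by simp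

lemma has_vector_derivative_mexp_scaleR:
  "((\<lambda>a. mexp (a *\<^sub>R Y)) has_vector_derivative (Y::real^'n^'n)) (at 0)"
proof -
  define C where "C = norm (mat 1::real^'n^'n) * (norm Y)\<^sup>2 * exp (norm Y)"
  have remainder: "norm (mexp (a *\<^sub>R Y) - mat 1 - a *\<^sub>R Y) / \<bar>a\<bar> \<le> C * \<bar>a\<bar>"
    if "\<bar>a\<bar> \<le> 1" for a
  proof -
    have "norm (mexp (a *\<^sub>R Y) - mat 1 - a *\<^sub>R Y)
        \<le> norm (mat 1::real^'n^'n) * (\<bar>a\<bar> * norm Y)\<^sup>2 * exp (\<bar>a\<bar> * norm Y)"
      using norm_mexp_sub_linear_le[of "a *\<^sub>R Y"] by simp
    also have "\<dots> \<le> norm (mat 1::real^'n^'n) * (\<bar>a\<bar> * norm Y)\<^sup>2 * exp (norm Y)"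
      by (intro mult_left_mono) (use that in \<open>simp_all add: mult_left_le_one_le\<close>)
    also have "\<dots> = C * \<bar>a\<bar> * \<bar>a\<bar>"
      by (simp add: C_def power_mult_distrib power2_eq_square mult_ac)
    finally have "norm (mexp (a *\<^sub>R Y) - mat 1 - a *\<^sub>R Y) \<le> C * \<bar>a\<bar> * \<bar>a\<bar>" .
    then show ?thesis
      by (cases "a = 0") (simp_all add: divide_le_eq)
  qed
  have "((\<lambda>a. norm (mexp (a *\<^sub>R Y) - mexp (0 *\<^sub>R Y) - (a - 0) *\<^sub>R Y) / norm (a - 0)) \<longlongrightarrow> 0) (at 0)"
  proof (rule Lim_null_comparison)
    show "\<forall>\<^sub>F a in at 0. norm (norm (mexp (a *\<^sub>R Y) - mexp (0 *\<^sub>R Y) - (a - 0) *\<^sub>R Y) / norm (a - 0)) \<le> C * \<bar>a\<bar>"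
      unfolding eventually_at by (rule exI[of _ 1]) (auto simp: dist_real_def intro!: remainder)
    show "((\<lambda>a::real. C * \<bar>a\<bar>) \<longlongrightarrow> 0) (at 0)"
      by (auto intro!: tendsto_eq_intros)
  qed
  then show ?thesis
    unfolding has_vector_derivative_def has_derivative_iff_norm
    by (simp add: bounded_linear_scaleR_left)
qed

lemma sum_le_sqrt_card_sum_power2:
  "(\<Sum>i\<in>A. (t i::real)) \<le> sqrt (real (card A)) * sqrt (\<Sum>i\<in>A. (t i)\<^sup>2)"
proof -
  have "(\<Sum>i\<in>A. t i)\<^sup>2 \<le> (\<Sum>i\<in>A. (t i)\<^sup>2) * real (card A)"
    by (rule sum_squared_le_sum_of_squares)
  then have "(\<Sum>i\<in>A. t i) \<le> sqrt ((\<Sum>i\<in>A. (t i)\<^sup>2) * real (card A))"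
    by (simp add: real_le_rsqrt)
  then show ?thesis
    by (simp add: real_sqrt_mult mult.commute)
qed


lemma Kmat_origin: "Kmat U0 Y M W 0 0 = transpose U0 ** M ** U0"
  by (simp add: Kmat_def)

lemma Kmat_has_vector_derivative_alpha:
  fixes U0 Y M W :: "real^'n^'n"
  shows "((\<lambda>a. Kmat U0 Y M W a 0) has_vector_derivative
      transpose U0 ** M ** U0 ** Y + transpose Y ** (transpose U0 ** M ** U0)) (at 0)"
proof -
  note mult = bounded_bilinear_matrix_mult[where 'm='n and 'n='n and 'p='n]
  have U: "((\<lambda>a. U0 ** mexp (a *\<^sub>R Y)) has_vector_derivative U0 ** Y) (at 0)"
    by (rule bounded_linear.has_vector_derivative[OF bounded_bilinear.bounded_linear_right[OF mult]
          has_vector_derivative_mexp_scaleR])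
  have UT: "((\<lambda>a. transpose (U0 ** mexp (a *\<^sub>R Y)) ** M) has_vector_derivative transpose (U0 ** Y) ** M) (at 0)"
    by (rule bounded_linear.has_vector_derivative[OF bounded_bilinear.bounded_linear_left[OF mult]
          bounded_linear.has_vector_derivative[OF bounded_linear_transpose U]])
  have "transpose (U0 ** mat 1) ** M ** (U0 ** Y) + transpose (U0 ** Y) ** M ** (U0 ** mat 1)
      = transpose U0 ** M ** U0 ** Y + transpose Y ** (transpose U0 ** M ** U0)"
    by (simp add: matrix_transpose_mul matrix_mul_assoc)
  then show ?thesis
    using bounded_bilinear.has_vector_derivative[OF mult UT U] by (simp add: Kmat_def Let_def)
qed

lemma Kmat_has_vector_derivative_sigma:
  fixes U0 Y M W :: "real^'n^'n"
  shows "((\<lambda>s. Kmat U0 Y M W 0 s) has_vector_derivative transpose U0 ** W ** U0) (at 0)"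
proof -
  note mult = bounded_bilinear_matrix_mult[where 'm='n and 'n='n and 'p='n]
  have conj: "bounded_linear (\<lambda>B. transpose U0 ** B ** U0)"
    using bounded_linear_compose[OF bounded_bilinear.bounded_linear_left[OF mult]
        bounded_bilinear.bounded_linear_right[OF mult]] by (simp add: o_def)
  have "((\<lambda>s. M + s *\<^sub>R W) has_vector_derivative W) (at 0)"
    by (auto intro!: derivative_eq_intros)
  then have "((\<lambda>s. transpose U0 ** (M + s *\<^sub>R W) ** U0) has_vector_derivative transpose U0 ** W ** U0) (at 0)"
    by (rule bounded_linear.has_vector_derivative[OF conj])
  then show ?thesis
    by (simp add: Kmat_def)
qed

text \<open>The summand of \<open>\<tilde>A\<^sub>\<sigma>\<close> for a one-parameter family \<open>K(t)\<close> of matrices, with derivatives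
  taken at \<open>t = 0\<close>; the summand of \<open>\<tilde>A\<^sub>\<alpha>\<close> is the same number because
  \<open>Tr(A\<^sup>TB) = Tr(B\<^sup>TA)\<close>.\<close>

definition second_variation_deriv :: "(real \<Rightarrow> real^('n::{finite,linorder})^('n::{finite,linorder})) \<Rightarrow> real^('n::{finite,linorder})^('n::{finite,linorder}) \<Rightarrow> real" where
  "second_variation_deriv K X =
     trace (transpose (low (commut (K 0) X)) ** vector_derivative (\<lambda>t. low (commut (K t) X)) (at 0)
       + transpose (vector_derivative (\<lambda>t. low (commut (K t) X)) (at 0)) ** low (commut (K 0) X)
       + transpose (low (commut (commut (K 0) X) X)) ** vector_derivative (\<lambda>t. low (K t)) (at 0)
       + transpose (vector_derivative (\<lambda>t. low (K t)) (at 0)) ** low (commut (commut (K 0) X) X))"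

lemma second_variation_deriv_eq_inner:
  assumes "(K has_vector_derivative D) (at 0)"
  shows "second_variation_deriv K X
    = 2 * (low (commut (K 0) X) \<bullet> low (commut D X)) + 2 * (low (commut (commut (K 0) X) X) \<bullet> low D)"
proof -
  have "vector_derivative (\<lambda>t. low (K t)) (at 0) = low D"
    by (rule vector_derivative_bounded_linear[OF bounded_linear_low assms])
  moreover have "vector_derivative (\<lambda>t. low (commut (K t) X)) (at 0) = low (commut D X)"
    using vector_derivative_bounded_linear[OF bounded_linear_compose[OF bounded_linear_low
          bounded_linear_commut_left] assms] by (simp add: o_def)
  ultimately show ?thesis
    by (simp add: second_variation_deriv_def trace_add trace_transpose_mult inner_commute)
qed

lemma abs_second_variation_deriv_le:
  assumes "(K has_vector_derivative D) (at 0)"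
  shows "\<bar>second_variation_deriv K X\<bar> \<le> 16 * norm (K 0) * norm D * (norm X)\<^sup>2"
proof -
  let ?g = "low (commut (K 0) X)" and ?h = "low (commut (commut (K 0) X) X)"
  have "\<bar>second_variation_deriv K X\<bar> \<le> 2 * \<bar>?g \<bullet> low (commut D X)\<bar> + 2 * \<bar>?h \<bullet> low D\<bar>"
    unfolding second_variation_deriv_eq_inner[OF assms] by linarith
  also have "\<dots> \<le> 2 * (norm ?g * norm (low (commut D X))) + 2 * (norm ?h * norm (low D))"
    by (intro add_mono mult_left_mono Cauchy_Schwarz_ineq2) simp_all
  also have "\<dots> \<le> 2 * ((2 * norm (K 0) * norm X) * (2 * norm D * norm X))
      + 2 * ((4 * norm (K 0) * (norm X)\<^sup>2) * norm D)"
    by (intro add_mono mult_left_mono mult_mono norm_low_commut_le norm_low_commut_commut_le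
        norm_low_le) simp_all
  also have "\<dots> = 16 * norm (K 0) * norm D * (norm X)\<^sup>2"
    by (simp add: power2_eq_square algebra_simps)
  finally show ?thesis .
qed

lemma abs_second_variation_deriv_Kmat_alpha_le:
  assumes "orthogonal_matrix U0"
  shows "\<bar>second_variation_deriv (\<lambda>a. Kmat U0 Y M W a 0) X\<bar> \<le> 32 * (norm M)\<^sup>2 * norm Y * (norm X)\<^sup>2"
proof -
  let ?T = "transpose U0 ** M ** U0"
  have T: "norm ?T = norm M"
    using assms by (rule norm_orthogonal_conj)
  have "norm (?T ** Y + transpose Y ** ?T) \<le> norm ?T * norm Y + norm (transpose Y) * norm ?T"
    by (intro norm_triangle_le add_mono norm_matrix_mult_le)
  then have D: "norm (?T ** Y + transpose Y ** ?T) \<le> 2 * norm M * norm Y"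
    by (simp add: T norm_transpose)
  have "\<bar>second_variation_deriv (\<lambda>a. Kmat U0 Y M W a 0) X\<bar>
      \<le> 16 * norm M * norm (?T ** Y + transpose Y ** ?T) * (norm X)\<^sup>2"
    using abs_second_variation_deriv_le[OF Kmat_has_vector_derivative_alpha[of U0 Y M W]] by (simp add: Kmat_origin T)
  also have "\<dots> \<le> 16 * norm M * (2 * norm M * norm Y) * (norm X)\<^sup>2"
    by (intro mult_right_mono mult_left_mono D) simp_all
  finally show ?thesis by (simp add: power2_eq_square mult_ac)
qed

lemma abs_second_variation_deriv_Kmat_sigma_le:
  assumes "orthogonal_matrix U0"
  shows "\<bar>second_variation_deriv (\<lambda>s. Kmat U0 Y M W 0 s) X\<bar> \<le> 16 * norm M * norm W * (norm X)\<^sup>2"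
  using abs_second_variation_deriv_le[OF Kmat_has_vector_derivative_sigma[of U0 Y M W]]
  by (simp add: Kmat_origin norm_orthogonal_conj[OF assms])

theorem lemma11:
  fixes M W :: "nat \<Rightarrow> real^(('d::{finite,linorder}))^('d::{finite,linorder})"
    and Lam :: "nat \<Rightarrow> ('d::{finite,linorder}) \<Rightarrow> real"
    and V U0 Y X :: "real^('d::{finite,linorder})^('d::{finite,linorder})"
    and N :: nat
  assumes "invertible V"
    and "\<forall>n\<in>{1..N}. M n = V ** diagm (Lam n) ** matrix_inv V"
    and "\<forall>n\<in>{1..N}. norm (W n) \<le> 1"
    and "orthogonal_matrix U0"
    and "\<forall>n\<in>{1..N}. low (transpose U0 ** M n ** U0) = 0"
    and "skew Y" and "norm Y = 1" and "skew X"
  defines "g \<equiv> \<lambda>n a s. low (Kmat U0 Y (M n) (W n) a s)"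
    and "gd \<equiv> \<lambda>n a s. low (commut (Kmat U0 Y (M n) (W n) a s) X)"
    and "gdd \<equiv> \<lambda>n a s. low (commut (commut (Kmat U0 Y (M n) (W n) a s) X) X)"
  defines "Atil_alpha \<equiv> \<bar>\<Sum>n=1..N.
      trace (transpose (gd n 0 0) ** vector_derivative (\<lambda>a. gd n a 0) (at 0)
           + transpose (gd n 0 0) ** vector_derivative (\<lambda>a. gd n a 0) (at 0)
           + transpose (gdd n 0 0) ** vector_derivative (\<lambda>a. g n a 0) (at 0)
           + transpose (vector_derivative (\<lambda>a. g n a 0) (at 0)) ** gdd n 0 0)\<bar>"
    and "Atil_sigma \<equiv> \<bar>\<Sum>n=1..N.
      trace (transpose (gd n 0 0) ** vector_derivative (\<lambda>s. gd n 0 s) (at 0)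
           + transpose (vector_derivative (\<lambda>s. gd n 0 s) (at 0)) ** gd n 0 0
           + transpose (gdd n 0 0) ** vector_derivative (\<lambda>s. g n 0 s) (at 0)
           + transpose (vector_derivative (\<lambda>s. g n 0 s) (at 0)) ** gdd n 0 0)\<bar>"
  shows "Atil_alpha \<le> 32 * (\<Sum>n=1..N. (norm (M n))\<^sup>2) * (norm X)\<^sup>2
       \<and> Atil_sigma \<le> 16 * sqrt (real N) * sqrt (\<Sum>n=1..N. (norm (M n))\<^sup>2) * (norm X)\<^sup>2"
proof -
  have alpha: "Atil_alpha = \<bar>\<Sum>n=1..N. second_variation_deriv (\<lambda>a. Kmat U0 Y (M n) (W n) a 0) X\<bar>"
    unfolding Atil_alpha_def g_def gd_def gdd_def second_variation_deriv_def trace_add trace_transpose_mult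
    by (simp add: inner_commute)
  have sigma: "Atil_sigma = \<bar>\<Sum>n=1..N. second_variation_deriv (\<lambda>s. Kmat U0 Y (M n) (W n) 0 s) X\<bar>"
    unfolding Atil_sigma_def g_def gd_def gdd_def second_variation_deriv_def ..
  have "Atil_alpha \<le> (\<Sum>n=1..N. 32 * (norm (M n))\<^sup>2 * (norm X)\<^sup>2)"
    unfolding alpha using abs_second_variation_deriv_Kmat_alpha_le[OF assms(4), where Y=Y] \<open>norm Y = 1\<close>
    by (intro order_trans[OF sum_abs] sum_mono) (metis mult.right_neutral)
  also have "\<dots> = 32 * (\<Sum>n=1..N. (norm (M n))\<^sup>2) * (norm X)\<^sup>2"
    by (simp add: sum_distrib_left sum_distrib_right mult.assoc)
  finally have "Atil_alpha \<le> 32 * (\<Sum>n=1..N. (norm (M n))\<^sup>2) * (norm X)\<^sup>2" .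
  moreover have "Atil_sigma \<le> 16 * sqrt (real N) * sqrt (\<Sum>n=1..N. (norm (M n))\<^sup>2) * (norm X)\<^sup>2"
  proof -
    have "Atil_sigma \<le> (\<Sum>n=1..N. norm (M n)) * (16 * (norm X)\<^sup>2)"
      unfolding sigma sum_distrib_right using assms(3)
      by (intro order_trans[OF sum_abs] sum_mono order_trans[OF abs_second_variation_deriv_Kmat_sigma_le[OF assms(4)]])
        (simp, auto intro!: mult_left_mono mult_left_le_one_le)
    also have "\<dots> \<le> (sqrt (real N) * sqrt (\<Sum>n=1..N. (norm (M n))\<^sup>2)) * (16 * (norm X)\<^sup>2)"
      using sum_le_sqrt_card_sum_power2[of "\<lambda>n. norm (M n)" "{1..N}"] by (intro mult_right_mono) simp_all
    finally show ?thesis by (simp add: mult_ac)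
  qed
  ultimately show ?thesis ..
qed

end
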